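(* Let a binary game be given as described in the context, and suppose Assumptions (A1) and (A2) hold. If for every fixed vector $(\overline x_i)_{i\in I}\in\{0,1\}^n$ the resulting continuous game has a solution (Nash equilibrium), then a corresponding binary quasi-equilibrium exists for the binary game.
   Context: Binary game: players $i\in I=\{1,\dots,n\}$. Player $i$ chooses $x_i\in\{0,1\}$ and $y_i\in\mathbb{R}^m$ and solves $\min f_i(x_i,y_i,y_{-i})$ subject to $g_i(x_i,y_i)\le 0$, with $g_i:\{0,1\}\times\mathbb{R}^m\to\mathbb{R}^k$, $y_{-i}=(y_j)_{j\ne i}$; $K_i=\{(x_i,y_i):g_i(x_i,y_i)\le0\}$. Continuous game for fixed $(\overline x_i)_{i\in I}$: each player $i$ minimizes $f_i(\overline x_i,y_i,y_{-i})$ over $\{y_i:g_i(\overline x_i,y_i)\le0\}$; a solution is a vector $(y_i)_{i\in I}$ in which each $y_i$ is optimal given $y_{-i}$. Binary quasi-equilibrium: a vector $((x_i^*,y_i^* )\in K_i)_{i\in I}$ and compensations $\zeta_i\ge0$ such that for every $i$: (1) $y_i^*$ minimizes $f_i(x_i^*,\cdot,y_{-i}^* )$ over $\{y_i:g_i(x_i^*,y_i)\le0\}$; (2) $f_i(x_i^*,y_i^*,y_{-i}^* )-\zeta_i\le f_i(x_i^\times,y_i^\times,y_{-i}^* )$, where $x_i^\times=1-x_i^*$ and $y_i^\times$ minimizes $f_i(x_i^\times,\cdot,y_{-i}^* )$ over $\{y_i:g_i(x_i^\times,y_i)\le0\}$; (3) $\zeta_i$ is the minimal nonnegative number satisfying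 (2). Assumption (A1): for each $i$ and each fixed $x_i$ (and fixed $y_{-i}$), the KKT conditions of player $i$'s problem with respect to $y_i$ are necessary and sufficient, and $\{y_i:g_i(x_i,y_i)\le0\}$ is compact and non-empty. Assumption (A2): the upper-level objective functions $F$ (of $(x_i,y_i)_{i\in I}$) and $G$ (of the compensations $(\zeta_i)_{i\in I}$) are convex quadratic or linear for every fixed value of the binary variables, and $\partial G/\partial\zeta_i>0$ for all $i$. *)

theory Defs
  imports "HOL-Analysis.Analysis"
begin

text \<open>Players are the elements of a finite type 'n (I = {1..n}); strategies
y_i live in real^'m; constraint values g_i live in real^'k.  A binary
choice x_i is a real in {0,1}, profiles of binary choices are real^'n,
profiles of continuous strategies are real^'m^'n.
Objective: f i x_i y_i y  where the profile y provides y_{-i}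
(independence from the i-th component is assumed separately).\<close>

type_synonym ('n,'m) obj = "'n::finite \<Rightarrow> real \<Rightarrow> real^'m::finite \<Rightarrow> real^'m^'n \<Rightarrow> real"
type_synonym ('n,'m,'k) cons = "'n::finite \<Rightarrow> real \<Rightarrow> real^'m::finite \<Rightarrow> real^'k::finite"

definition feas :: "('n::finite,'m::finite,'k::finite) cons \<Rightarrow> 'n \<Rightarrow> real \<Rightarrow> (real^'m) set" where
  "feas g i xi = {yi. \<forall>l. g i xi yi $ l \<le> 0}"

definition is_min :: "('n::finite,'m::finite) obj \<Rightarrow> ('n,'m,'k::finite) cons \<Rightarrow> 'n \<Rightarrow> real \<Rightarrow> real^'m \<Rightarrow> real^'m^'n \<Rightarrow> bool" where
  "is_min f g i xi yi y \<longleftrightarrow> yi \<in> feas g i xi \<and> (\<forall>z\<in>feas g i xi. f i xi yi y \<le> f i xi z y)"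

definition kkt_point :: "('n::finite,'m::finite) obj \<Rightarrow> ('n,'m,'k::finite) cons \<Rightarrow> 'n \<Rightarrow> real \<Rightarrow> real^'m \<Rightarrow> real^'m^'n \<Rightarrow> bool" where
  "kkt_point f g i xi yi y \<longleftrightarrow> yi \<in> feas g i xi \<and>
     (\<exists>lam :: real^'k. (\<forall>l. 0 \<le> lam $ l \<and> lam $ l * g i xi yi $ l = 0) \<and>
        ((\<lambda>z. f i xi z y + (\<Sum>l\<in>UNIV. lam $ l * g i xi z $ l)) has_derivative (\<lambda>h. 0)) (at yi))"

text \<open>Assumption (A1) (with the differentiability that the KKT conditions presuppose).\<close>
definition A1 :: "('n::finite,'m::finite) obj \<Rightarrow> ('n,'m,'k::finite) cons \<Rightarrow> bool" where
  "A1 f g \<longleftrightarrow> (\<forall>i xi y. xi \<in> {0,1} \<longrightarrow>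
      (\<forall>z. (\<lambda>v. f i xi v y) differentiable (at z)) \<and>
      (\<forall>z. (\<lambda>v. g i xi v) differentiable (at z)) \<and>
      (\<forall>yi. is_min f g i xi yi y \<longleftrightarrow> kkt_point f g i xi yi y) \<and>
      compact (feas g i xi) \<and> feas g i xi \<noteq> {})"

definition cvx_quad_or_lin :: "('a::euclidean_space \<Rightarrow> real) \<Rightarrow> bool" where
  "cvx_quad_or_lin h \<longleftrightarrow> (\<exists>Q c d. linear Q \<and> (\<forall>z. 0 \<le> z \<bullet> Q z) \<and>
      (\<forall>z. h z = z \<bullet> Q z + c \<bullet> z + d))"

definition A2 :: "(real^'n::finite \<Rightarrow> real^'m::finite^'n \<Rightarrow> real) \<Rightarrow> (real^'n \<Rightarrow> real) \<Rightarrow> bool" where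
  "A2 F G \<longleftrightarrow> (\<forall>x. (\<forall>i. x $ i \<in> {0,1}) \<longrightarrow> cvx_quad_or_lin (F x)) \<and>
     cvx_quad_or_lin G \<and>
     (\<forall>z. (\<forall>i. 0 \<le> z $ i) \<longrightarrow> G differentiable (at z) \<and>
         (\<forall>i. 0 < frechet_derivative G (at z) (axis i 1)))"

definition cont_NE :: "('n::finite,'m::finite) obj \<Rightarrow> ('n,'m,'k::finite) cons \<Rightarrow> real^'n \<Rightarrow> real^'m^'n \<Rightarrow> bool" where
  "cont_NE f g x y \<longleftrightarrow> (\<forall>i. is_min f g i (x $ i) (y $ i) y)"

definition binary_QE :: "('n::finite,'m::finite) obj \<Rightarrow> ('n,'m,'k::finite) cons \<Rightarrow> real^'n \<Rightarrow> real^'m^'n \<Rightarrow> real^'n \<Rightarrow> bool" where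
  "binary_QE f g x y zeta \<longleftrightarrow> (\<forall>i.
     x $ i \<in> {0,1} \<and> y $ i \<in> feas g i (x $ i) \<and> 0 \<le> zeta $ i \<and>
     is_min f g i (x $ i) (y $ i) y \<and>
     (\<exists>yx. is_min f g i (1 - x $ i) yx y \<and>
        f i (x $ i) (y $ i) y - zeta $ i \<le> f i (1 - x $ i) yx y \<and>
        (\<forall>z'. 0 \<le> z' \<and> f i (x $ i) (y $ i) y - z' \<le> f i (1 - x $ i) yx y \<longrightarrow> zeta $ i \<le> z')))"

end

theory Submission
  imports Defs
begin

text \<open>Each player's alternative problem, with the binary choice flipped and y_{-i} frozen,
minimizes a continuous function over a compact nonempty set, so it has a minimizer.
The least compensation that makes x_i not worse than the flip is then the positive part
of the difference of the two optimal values.\<close>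

lemma is_min_exists:
  assumes "compact (feas g i xi)" and "feas g i xi \<noteq> {}"
    and "continuous_on (feas g i xi) (\<lambda>v. f i xi v y)"
  shows "\<exists>yi. is_min f g i xi yi y"
  using continuous_attains_inf[OF assms] unfolding is_min_def by blast

lemma A1_is_min_exists:
  assumes "A1 f g" and "xi \<in> {0,1}"
  shows "\<exists>yi. is_min f g i xi yi y"
proof (rule is_min_exists)
  from assms have diff: "\<forall>z. (\<lambda>v. f i xi v y) differentiable (at z)"
    and "compact (feas g i xi)" "feas g i xi \<noteq> {}"
    unfolding A1_def by blast+
  then show "compact (feas g i xi)" "feas g i xi \<noteq> {}" by blast+
  show "continuous_on (feas g i xi) (\<lambda>v. f i xi v y)"
    using diff by (meson continuous_at_imp_continuous_on differentiable_imp_continuous_within)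
qed

lemma max_0_diff_least_compensation:
  fixes a b :: real
  shows "a - max 0 (a - b) \<le> b"
    and "0 \<le> z \<Longrightarrow> a - z \<le> b \<Longrightarrow> max 0 (a - b) \<le> z"
  by auto

lemma binary_QE_of_cont_NE:
  assumes x: "\<forall>i. x $ i \<in> {0,1}" and y: "cont_NE f g x y"
    and yx: "\<And>i. is_min f g i (1 - x $ i) (yx i) y"
  shows "binary_QE f g x y (\<chi> i. max 0 (f i (x $ i) (y $ i) y - f i (1 - x $ i) (yx i) y))"
  unfolding binary_QE_def
proof (intro allI conjI)
  fix i
  show "x $ i \<in> {0,1}" using x by blast
  show "is_min f g i (x $ i) (y $ i) y" using y unfolding cont_NE_def by blast
  then show "y $ i \<in> feas g i (x $ i)" unfolding is_min_def by blast
  show "\<exists>yx'. is_min f g i (1 - x $ i) yx' y \<and>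
      f i (x $ i) (y $ i) y - (\<chi> i. max 0 (f i (x $ i) (y $ i) y - f i (1 - x $ i) (yx i) y)) $ i
        \<le> f i (1 - x $ i) yx' y \<and>
      (\<forall>z'. 0 \<le> z' \<and> f i (x $ i) (y $ i) y - z' \<le> f i (1 - x $ i) yx' y \<longrightarrow>
        (\<chi> i. max 0 (f i (x $ i) (y $ i) y - f i (1 - x $ i) (yx i) y)) $ i \<le> z')"
    using yx[of i] max_0_diff_least_compensation by (intro exI[of _ "yx i"]) simp
qed simp

theorem theorem3:
  fixes f :: "('n::finite,'m::finite) obj" and g :: "('n,'m,'k::finite) cons"
    and F :: "real^'n \<Rightarrow> real^'m^'n \<Rightarrow> real" and G :: "real^'n \<Rightarrow> real"
  assumes f_dep: "\<And>i xi yi y z. f i xi yi y = f i xi yi (\<chi> j. if j = i then z else y $ j)"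
    and a1: "A1 f g" and a2: "A2 F G"
    and cont_sol: "\<forall>x::real^'n. (\<forall>i. x $ i \<in> {0,1}) \<longrightarrow> (\<exists>y. cont_NE f g x y)"
  shows "\<forall>x::real^'n. (\<forall>i. x $ i \<in> {0,1}) \<longrightarrow> (\<exists>y zeta. binary_QE f g x y zeta)"
proof (intro allI impI)
  fix x :: "real^'n" assume x: "\<forall>i. x $ i \<in> {0,1}"
  then obtain y where y: "cont_NE f g x y" using cont_sol by blast
  have "\<forall>i. \<exists>yi. is_min f g i (1 - x $ i) yi y"
  proof
    fix i
    from x have "1 - x $ i \<in> {0,1}" by auto
    then show "\<exists>yi. is_min f g i (1 - x $ i) yi y" by (rule A1_is_min_exists[OF a1])
  qed
  then obtain yx where "\<And>i. is_min f g i (1 - x $ i) (yx i) y" by metis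
  from binary_QE_of_cont_NE[OF x y this]
  show "\<exists>y zeta. binary_QE f g x y zeta" by blast
qed

end
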